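(* Assume $d\ge1$ and let $\lambda\in\mathbb R$. Let $\bar u^*_0,\dots,\bar u^*_d$ be an ordering of $u^*_0,\dots,u^*_d$. Then the matrix representing $(L^*+\lambda)^2$ with respect to the ordered basis $\bar u^*_0,\dots,\bar u^*_d$ is irreducible tridiagonal if and only if one of the following holds: (i) $2\lambda+a^*_{d-1}+a^*_d\neq0$, $2\lambda+a^*_i+a^*_{i+1}=0$ for all $0\le i\le d-2$, and either $\bar u^*_i=u^*_{2i}$ for $0\le i\le\lfloor d/2\rfloor$ and $\bar u^*_i=u^*_{2(d-i)+1}$ for $\lfloor d/2\rfloor+1\le i\le d$; or $\bar u^*_i=u^*_{2i+1}$ for $0\le i\le\lceil d/2\rceil-1$ and $\bar u^*_i=u^*_{2(d-i)}$ for $\lceil d/2\rceil\le i\le d$. (ii) $2\lambda+a^*_0+a^*_1\neq0$, $2\lambda+a^*_i+a^*_{i+1}=0$ for all $1\le i\le d-1$, and either $\bar u^*_i=u^*_{d-2i}$ for $0\le i\le\lfloor d/2\rfloor$ and $\bar u^*_i=u^*_{2i-d-1}$ for $\lfloor d/2\rfloor+1\le i\le d$; or $\bar u^*_i=u^*_{d-2i-1}$ for $0\le i\le\lceil d/2\rceil-1$ and $\bar u^*_i=u^*_{2i-d}$ for $\lceil d/2\rceil\le i\le d$.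
   Context: Fix an integer $d\ge0$ and $r,s\in(-1,\infty)$. Write $(x)_i=x(x+1)\cdots(x+i-1)$, $(x)_0=1$. For $0\le i\le d$ put $\theta_i=(d-i)(d-i+r+s+1)$ (distinct) and $\theta^*_i=i$. Put $b^*_i=\frac{(d-i)(i-d-s)(2d-2i+r+s+2)_i}{(2d-2i+r+s)_{i+1}}$ ($0\le i\le d-1$), $c^*_i=\frac{i(i-d-r-1)(d-i+r+s+1)_{d-i}}{(d-i+r+s+2)_{d-i+1}}$ ($1\le i\le d$), $b^*_d=c^*_0=0$, $a^*_i=\theta^*_0-b^*_i-c^*_i$, $k^*_i=\frac{b^*_0\cdots b^*_{i-1}}{c^*_1\cdots c^*_i}$ ($0\le i\le d$). Put $c_i=i(i+r)$ and $\nu=\frac{\prod_{j=1}^d(\theta_0-\theta_j)}{c_1\cdots c_d}$. Let $\mathcal P_d(\mathbb R)$ be the real polynomials of degree at most $d$, each determined by its values at $\theta_0,\dots,\theta_d$. Let $L^*$ be the linear map on $\mathcal P_d(\mathbb R)$ with $(L^*f)(\theta_i)=b^*_i f(\theta_{i+1})+a^*_i f(\theta_i)+c^*_i f(\theta_{i-1})$ ($0\le i\le d$; terms with coefficient $b^*_d$ or $c^*_0$ omitted). Let $u^*_i\in\mathcal P_d(\mathbb R)$ be defined by $u^*_i(\theta_j)=0$ for $j\neq i$ and $u^*_i(\theta_i)=\nu/k^*_i$; these form a basis. A square matrix is irreducible tridiagonal if its nonzero entries lie on the diagonal, subdiagonal or superdiagonal and all subdiagonal and superdiagonal entries are nonzero.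 *)

theory Defs
  imports "HOL-Computational_Algebra.Polynomial"
begin

definition th :: "nat \<Rightarrow> real \<Rightarrow> real \<Rightarrow> nat \<Rightarrow> real" where
  "th d r s i = (real d - real i) * (real d - real i + r + s + 1)"

definition thstar :: "nat \<Rightarrow> real" where
  "thstar i = real i"

definition bstar :: "nat \<Rightarrow> real \<Rightarrow> real \<Rightarrow> nat \<Rightarrow> real" where
  "bstar d r s i = (if i < d then
     (real d - real i) * (real i - real d - s)
       * pochhammer (2 * real d - 2 * real i + r + s + 2) i
       / pochhammer (2 * real d - 2 * real i + r + s) (i + 1)
   else 0)"

definition cstar :: "nat \<Rightarrow> real \<Rightarrow> real \<Rightarrow> nat \<Rightarrow> real" where
  "cstar d r s i = (if 1 \<le> i \<and> i \<le> d then
     real i * (real i - real d - r - 1)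
       * pochhammer (real d - real i + r + s + 1) (d - i)
       / pochhammer (real d - real i + r + s + 2) (d - i + 1)
   else 0)"

definition astar :: "nat \<Rightarrow> real \<Rightarrow> real \<Rightarrow> nat \<Rightarrow> real" where
  "astar d r s i = thstar 0 - bstar d r s i - cstar d r s i"

definition kstar :: "nat \<Rightarrow> real \<Rightarrow> real \<Rightarrow> nat \<Rightarrow> real" where
  "kstar d r s i = (\<Prod>j<i. bstar d r s j) / (\<Prod>j\<in>{1..i}. cstar d r s j)"

definition cc :: "real \<Rightarrow> nat \<Rightarrow> real" where
  "cc r i = real i * (real i + r)"

definition nu :: "nat \<Rightarrow> real \<Rightarrow> real \<Rightarrow> real" where
  "nu d r s = (\<Prod>j\<in>{1..d}. th d r s 0 - th d r s j) / (\<Prod>j\<in>{1..d}. cc r j)"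

definition lag :: "nat \<Rightarrow> real \<Rightarrow> real \<Rightarrow> nat \<Rightarrow> real poly" where
  "lag d r s i = smult (1 / (\<Prod>j\<in>{0..d} - {i}. th d r s i - th d r s j))
      (\<Prod>j\<in>{0..d} - {i}. [:- th d r s j, 1:])"

definition interp :: "nat \<Rightarrow> real \<Rightarrow> real \<Rightarrow> (nat \<Rightarrow> real) \<Rightarrow> real poly" where
  "interp d r s v = (\<Sum>i\<in>{0..d}. smult (v i) (lag d r s i))"

definition Lstar :: "nat \<Rightarrow> real \<Rightarrow> real \<Rightarrow> real poly \<Rightarrow> real poly" where
  "Lstar d r s f = interp d r s (\<lambda>i.
      (if i < d then bstar d r s i * poly f (th d r s (i + 1)) else 0)
      + astar d r s i * poly f (th d r s i)
      + (if 0 < i then cstar d r s i * poly f (th d r s (i - 1)) else 0))"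

definition ustar :: "nat \<Rightarrow> real \<Rightarrow> real \<Rightarrow> nat \<Rightarrow> real poly" where
  "ustar d r s i = smult (nu d r s / kstar d r s i) (lag d r s i)"

definition rep_matrix :: "nat \<Rightarrow> (real poly \<Rightarrow> real poly) \<Rightarrow> (nat \<Rightarrow> real poly) \<Rightarrow> nat \<Rightarrow> nat \<Rightarrow> real" where
  "rep_matrix d T b = (THE M. (\<forall>i j. (d < i \<or> d < j) \<longrightarrow> M i j = 0) \<and>
      (\<forall>j\<le>d. T (b j) = (\<Sum>i\<in>{0..d}. smult (M i j) (b i))))"

definition irred_tridiag :: "nat \<Rightarrow> (nat \<Rightarrow> nat \<Rightarrow> real) \<Rightarrow> bool" where
  "irred_tridiag d M \<longleftrightarrow>
     (\<forall>i\<le>d. \<forall>j\<le>d. (i + 1 < j \<or> j + 1 < i) \<longrightarrow> M i j = 0) \<and>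
     (\<forall>i<d. M (i + 1) i \<noteq> 0 \<and> M i (i + 1) \<noteq> 0)"

definition Lsq :: "nat \<Rightarrow> real \<Rightarrow> real \<Rightarrow> real \<Rightarrow> real poly \<Rightarrow> real poly" where
  "Lsq d r s lam f = (let g = Lstar d r s f + smult lam f in Lstar d r s g + smult lam g)"

end

theory Submission
  imports Defs
begin

(*
  On the values f(theta_0), ..., f(theta_d) the map L* + lam acts by a tridiagonal matrix T with
  nonzero off-diagonal entries b*_i, c*_i and diagonal a*_i + lam, and u*_k is a nonzero multiple
  of the k-th Lagrange polynomial. So the matrix of (L* + lam)^2 in the reordered basis is T^2
  with rows and columns permuted and conjugated by a diagonal matrix: only the zero pattern of
  T^2 matters. The entries (T^2)_{i,i+2}, (T^2)_{i+2,i} never vanish, whereas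
  (T^2)_{i,i+1} = b*_i (2 lam + a*_i + a*_{i+1}) and (T^2)_{i+1,i} = c*_{i+1} (2 lam + a*_i + a*_{i+1}).
  Hence the matrix is irreducible tridiagonal iff the ordering runs along a chordless Hamiltonian
  path of the graph on {0..d} with edges {i, i+2}, and {i, i+1} for i in
  D = {i. 2 lam + a*_i + a*_{i+1} ~= 0}.

  A path has no vertex of degree 3, is connected and has a vertex of degree 1; this forces
  D to be {d-1} or {0} inside {0..<d}, except for d = 3 and D = {1}, where the graph is the path
  0 - 2 - 1 - 3. That case cannot occur: a*_0 + a*_1 - a*_2 - a*_3 = 4 (s - r) / (r + s + 4), and
  a*_0 = a*_2 when r = s. For D = {d-1} the graph is itself the path 0, 2, 4, ..., 5, 3, 1, whose
  only orderings are this one and its reverse; D = {0} is its mirror image under i |-> d - i.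
*)

lemma th_eq_iff:
  assumes "r > -1" "s > -1" "i \<le> d" "j \<le> d"
  shows "th d r s i = th d r s j \<longleftrightarrow> i = j"
proof
  assume eq: "th d r s i = th d r s j"
  show "i = j"
  proof (rule ccontr)
    assume "i \<noteq> j"
    then have "real i + real j + 1 \<le> 2 * real d" using assms(3,4) by linarith
    then have "2 * real d - real i - real j + r + s + 1 > 0" using assms(1,2) by linarith
    moreover have "th d r s i - th d r s j = (real j - real i) * (2 * real d - real i - real j + r + s + 1)"
      by (simp add: th_def algebra_simps)
    ultimately show False using eq \<open>i \<noteq> j\<close> by simp
  qed
qed simp

lemma poly_lag:
  assumes "r > -1" "s > -1" "i \<le> d" "j \<le> d"
  shows "poly (lag d r s i) (th d r s j) = (if i = j then 1 else 0)"
proof (cases "i = j")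
  case True
  have "(\<Prod>k\<in>{0..d} - {i}. th d r s i - th d r s k) \<noteq> 0"
    using th_eq_iff[OF assms(1,2)] assms by auto
  then show ?thesis using True by (simp add: lag_def poly_prod)
next
  case False
  have "(\<Prod>k\<in>{0..d} - {i}. th d r s j - th d r s k) = 0"
    using False assms by (auto intro!: bexI[of _ j])
  then show ?thesis using False by (simp add: lag_def poly_prod)
qed

lemma degree_lag:
  assumes "i \<le> d"
  shows "degree (lag d r s i) \<le> d"
proof -
  have "degree (\<Prod>j\<in>{0..d} - {i}. [:- th d r s j, 1:]) \<le> (\<Sum>j\<in>{0..d} - {i}. 1)"
    using degree_prod_sum_le[of "{0..d} - {i}" "\<lambda>j. [:- th d r s j, 1:]"] by (simp add: o_def)
  also have "\<dots> = d" using assms by simp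
  finally show ?thesis unfolding lag_def using degree_smult_le order.trans by blast
qed

lemma poly_interp:
  assumes "r > -1" "s > -1" "j \<le> d"
  shows "poly (interp d r s v) (th d r s j) = v j"
  using assms by (simp add: interp_def poly_sum poly_lag if_distrib cong: if_cong)

lemma degree_interp: "degree (interp d r s v) \<le> d"
  unfolding interp_def
  by (rule degree_sum_le) (auto intro: order.trans[OF degree_smult_le] degree_lag)

lemma interp_poly:
  assumes "r > -1" "s > -1" "degree p \<le> d"
  shows "interp d r s (\<lambda>i. poly p (th d r s i)) = p"
proof (rule poly_eqI_degree[where A = "th d r s ` {0..d}"])
  have "card (th d r s ` {0..d}) = d + 1"
    using th_eq_iff[OF assms(1,2)] by (subst card_image) (auto intro!: inj_onI)
  then show "degree (interp d r s (\<lambda>i. poly p (th d r s i))) < card (th d r s ` {0..d})"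
    "degree p < card (th d r s ` {0..d})"
    using degree_interp[of d r s] assms(3) by (auto simp: less_Suc_eq_le)
qed (auto simp: poly_interp assms)

lemma bstar_nonzero:
  assumes "r > -1" "s > -1" "i < d"
  shows "bstar d r s i \<noteq> 0"
proof -
  have "real d - real i \<ge> 1" using assms by linarith
  then have "pochhammer (2 * real d - 2 * real i + r + s + 2) i > 0"
    and "pochhammer (2 * real d - 2 * real i + r + s) (i + 1) > 0"
    using assms by (auto intro!: pochhammer_pos)
  moreover have "real i - real d - s < 0" "real d - real i \<noteq> 0" using assms by auto
  ultimately show ?thesis using assms by (simp add: bstar_def)
qed

lemma cstar_nonzero:
  assumes "r > -1" "s > -1" "0 < i" "i \<le> d"
  shows "cstar d r s i \<noteq> 0"
proof -
  have "real d - real i \<ge> 0" using assms by simp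
  then have "pochhammer (real d - real i + r + s + 2) (d - i + 1) > 0"
    using assms by (auto intro!: pochhammer_pos)
  moreover have "pochhammer (real d - real i + r + s + 1) (d - i) \<noteq> 0"
  proof (cases "i = d")
    case False
    then have "real d - real i \<ge> 1" using assms by linarith
    then show ?thesis using assms by (auto intro!: pochhammer_pos less_imp_neq[symmetric])
  qed simp
  moreover have "real i - real d - r - 1 < 0" "real i \<noteq> 0" using assms by auto
  ultimately show ?thesis using assms by (simp add: cstar_def)
qed

lemma kstar_nonzero: "r > -1 \<Longrightarrow> s > -1 \<Longrightarrow> i \<le> d \<Longrightarrow> kstar d r s i \<noteq> 0"
  by (auto simp: kstar_def bstar_nonzero cstar_nonzero)

lemma nu_nonzero:
  assumes "r > -1" "s > -1"
  shows "nu d r s \<noteq> 0"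
proof -
  have "th d r s 0 \<noteq> th d r s j" if "j \<in> {1..d}" for j
    using th_eq_iff[OF assms, of 0 d j] that by auto
  moreover have "cc r j \<noteq> 0" if "j \<in> {1..d}" for j
    using assms that by (auto simp: cc_def)
  ultimately show ?thesis by (simp add: nu_def)
qed

lemma poly_ustar:
  assumes "r > -1" "s > -1" "k \<le> d" "j \<le> d"
  shows "poly (ustar d r s k) (th d r s j) = (if j = k then nu d r s / kstar d r s k else 0)"
  using assms by (simp add: ustar_def poly_lag)

lemma ustar_eq_iff:
  assumes "r > -1" "s > -1" "k \<le> d" "l \<le> d"
  shows "ustar d r s k = ustar d r s l \<longleftrightarrow> k = l"
proof
  assume "ustar d r s k = ustar d r s l"
  then have "poly (ustar d r s l) (th d r s k) \<noteq> 0"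
    using assms poly_ustar[OF assms(1,2,3,3)] by (simp add: nu_nonzero kstar_nonzero)
  then show "k = l" using poly_ustar[OF assms(1,2,4,3)] by (auto split: if_splits)
qed simp

lemma rep_matrix_lag_basis:
  assumes r: "r > -1" and s: "s > -1" and \<sigma>: "bij_betw \<sigma> {0..d} {0..d}"
    and ub: "\<And>i. i \<le> d \<Longrightarrow> ub i = smult (w (\<sigma> i)) (lag d r s (\<sigma> i))"
    and w: "\<And>k. k \<le> d \<Longrightarrow> w k \<noteq> 0"
    and deg: "\<And>j. j \<le> d \<Longrightarrow> degree (T (ub j)) \<le> d"
  shows "rep_matrix d T ub = (\<lambda>i j. if i \<le> d \<and> j \<le> d then poly (T (ub j)) (th d r s (\<sigma> i)) / w (\<sigma> i) else 0)"
    (is "_ = ?M")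
proof -
  have \<sigma>_le: "\<sigma> i \<le> d" if "i \<le> d" for i using \<sigma> that by (auto simp: bij_betw_def)
  have \<sigma>_eq_iff: "\<sigma> i = \<sigma> i' \<longleftrightarrow> i = i'" if "i \<le> d" "i' \<le> d" for i i'
    using \<sigma> that by (auto simp: bij_betw_def inj_on_def)
  show ?thesis
    unfolding rep_matrix_def
  proof (rule the_equality)
    show "(\<forall>i j. (d < i \<or> d < j) \<longrightarrow> ?M i j = 0) \<and> (\<forall>j\<le>d. T (ub j) = (\<Sum>i\<in>{0..d}. smult (?M i j) (ub i)))"
    proof (intro conjI allI impI)
      fix j assume j: "j \<le> d"
      let ?p = "T (ub j)"
      have "(\<Sum>i\<in>{0..d}. smult (?M i j) (ub i)) = (\<Sum>i\<in>{0..d}. smult (poly ?p (th d r s (\<sigma> i))) (lag d r s (\<sigma> i)))"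
        using j ub w \<sigma>_le by (intro sum.cong) auto
      also have "\<dots> = (\<Sum>k\<in>{0..d}. smult (poly ?p (th d r s k)) (lag d r s k))"
        by (rule sum.reindex_bij_betw[OF \<sigma>])
      also have "\<dots> = ?p" using interp_poly[OF r s deg[OF j]] by (simp add: interp_def)
      finally show "?p = (\<Sum>i\<in>{0..d}. smult (?M i j) (ub i))" ..
    qed auto
  next
    fix M assume M: "(\<forall>i j. (d < i \<or> d < j) \<longrightarrow> M i j = 0) \<and> (\<forall>j\<le>d. T (ub j) = (\<Sum>i\<in>{0..d}. smult (M i j) (ub i)))"
    have poly_ub: "poly (ub i') (th d r s (\<sigma> i)) = (if i' = i then w (\<sigma> i) else 0)"
      if "i \<le> d" "i' \<le> d" for i i'
      using that ub[OF that(2)] poly_lag[OF r s \<sigma>_le[OF that(2)] \<sigma>_le[OF that(1)]] \<sigma>_eq_iff by auto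
    show "M = ?M"
    proof (intro ext)
      fix i j
      show "M i j = ?M i j"
      proof (cases "i \<le> d \<and> j \<le> d")
        case True
        then have "poly (T (ub j)) (th d r s (\<sigma> i)) = (\<Sum>i'\<in>{0..d}. M i' j * poly (ub i') (th d r s (\<sigma> i)))"
          using M by (simp add: poly_sum)
        also have "\<dots> = M i j * w (\<sigma> i)"
          using True by (simp add: poly_ub if_distrib cong: if_cong)
        finally show ?thesis using True w[OF \<sigma>_le] by simp
      qed (use M in auto)
    qed
  qed
qed

definition tridiag_apply ::
    "nat \<Rightarrow> (nat \<Rightarrow> real) \<Rightarrow> (nat \<Rightarrow> real) \<Rightarrow> (nat \<Rightarrow> real) \<Rightarrow> (nat \<Rightarrow> real) \<Rightarrow> nat \<Rightarrow> real" where
  "tridiag_apply d b a c v i =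
     (if i < d then b i * v (i + 1) else 0) + a i * v i + (if 0 < i then c i * v (i - 1) else 0)"

definition sq_adj :: "(nat \<Rightarrow> bool) \<Rightarrow> nat \<Rightarrow> nat \<Rightarrow> bool" where
  "sq_adj D m k \<longleftrightarrow> m + 2 = k \<or> k + 2 = m \<or> (m + 1 = k \<and> D m) \<or> (k + 1 = m \<and> D k)"

lemma tridiag_apply_cong:
  "i \<le> d \<Longrightarrow> (\<And>j. j \<le> d \<Longrightarrow> v j = v' j) \<Longrightarrow> tridiag_apply d b a c v i = tridiag_apply d b a c v' i"
  by (simp add: tridiag_apply_def)

lemma tridiag_apply_scale:
  "tridiag_apply d b a c (\<lambda>j. x * v j) = (\<lambda>i. x * tridiag_apply d b a c v i)"
  by (auto simp: tridiag_apply_def algebra_simps)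

lemma tridiag_apply_unit:
  "tridiag_apply d b a c (\<lambda>j. if j = k then 1 else 0) j =
     (if j + 1 = k \<and> j < d then b j else 0) + (if j = k then a j else 0) + (if j = k + 1 then c j else 0)"
  by (auto simp: tridiag_apply_def)

lemma tridiag_apply_sq_unit_nonzero_iff:
  fixes b a c :: "nat \<Rightarrow> real"
  assumes b: "\<And>i. i < d \<Longrightarrow> b i \<noteq> 0" and c: "\<And>i. 0 < i \<Longrightarrow> i \<le> d \<Longrightarrow> c i \<noteq> 0"
    and "m \<le> d" "k \<le> d" "m \<noteq> k"
  shows "tridiag_apply d b a c (tridiag_apply d b a c (\<lambda>j. if j = k then 1 else 0)) m \<noteq> 0
    \<longleftrightarrow> sq_adj (\<lambda>i. a i + a (i + 1) \<noteq> 0) m k"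
proof -
  let ?e = "tridiag_apply d b a c (\<lambda>j. if j = k then 1 else 0)"
  have T2: "tridiag_apply d b a c ?e m =
      (if m < d then b m * ?e (m + 1) else 0) + a m * ?e m + (if 0 < m then c m * ?e (m - 1) else 0)"
    by (simp only: tridiag_apply_def[of d b a c ?e m])
  consider "k = m + 2" | "m = k + 2" | "k = m + 1" | "m = k + 1" | "m + 2 < k \<or> k + 2 < m"
    using assms(5) by linarith
  then show ?thesis
  proof cases
    case 1
    then have "tridiag_apply d b a c ?e m = b m * b (m + 1)"
      using assms(4) unfolding T2 tridiag_apply_unit by simp arith
    then show ?thesis using 1 assms(4) b[of m] b[of "m + 1"] by (simp add: sq_adj_def)
  next
    case 2
    then have "tridiag_apply d b a c ?e m = c m * c (k + 1)"
      using assms(3) unfolding T2 tridiag_apply_unit by simp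
    then show ?thesis using 2 assms(3) c[of m] c[of "k + 1"] by (simp add: sq_adj_def)
  next
    case 3
    then have "tridiag_apply d b a c ?e m = b m * (a m + a (m + 1))"
      using assms(4) unfolding T2 tridiag_apply_unit by (simp add: algebra_simps) arith
    then show ?thesis using 3 assms(4) b[of m] by (simp add: sq_adj_def)
  next
    case 4
    then have "tridiag_apply d b a c ?e m = c m * (a k + a (k + 1))"
      using assms(3) unfolding T2 tridiag_apply_unit by (simp add: algebra_simps)
    then show ?thesis using 4 assms(3) c[of m] by (simp add: sq_adj_def)
  next
    case 5
    then have "?e j = 0" if "j \<in> {m - 1, m, m + 1}" for j
      using that unfolding tridiag_apply_unit by auto
    then have "tridiag_apply d b a c ?e m = 0"
      unfolding T2 by simp
    then show ?thesis using 5 by (auto simp: sq_adj_def)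
  qed
qed

lemma sq_adj_irrefl: "\<not> sq_adj D m m"
  by (simp add: sq_adj_def)

lemma poly_Lstar_shift:
  assumes "r > -1" "s > -1" "i \<le> d"
  shows "poly (Lstar d r s f + smult lam f) (th d r s i) =
    tridiag_apply d (bstar d r s) (\<lambda>k. astar d r s k + lam) (cstar d r s) (\<lambda>k. poly f (th d r s k)) i"
  using assms by (simp add: Lstar_def poly_interp tridiag_apply_def algebra_simps)

lemma poly_Lsq:
  fixes lam :: real
  assumes "r > -1" "s > -1" "i \<le> d"
  defines "T \<equiv> tridiag_apply d (bstar d r s) (\<lambda>k. astar d r s k + lam) (cstar d r s)"
  shows "poly (Lsq d r s lam f) (th d r s i) = T (T (\<lambda>k. poly f (th d r s k))) i"
proof -
  define g where "g = Lstar d r s f + smult lam f"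
  have "poly (Lsq d r s lam f) (th d r s i) = T (\<lambda>k. poly g (th d r s k)) i"
    unfolding Lsq_def Let_def g_def[symmetric] T_def using poly_Lstar_shift[OF assms(1-3)] .
  also have "\<dots> = T (T (\<lambda>k. poly f (th d r s k))) i"
    unfolding T_def
    by (rule tridiag_apply_cong[OF assms(3)]) (unfold g_def, rule poly_Lstar_shift[OF assms(1,2)])
  finally show ?thesis .
qed

lemma degree_Lsq:
  assumes "degree f \<le> d"
  shows "degree (Lsq d r s lam f) \<le> d"
proof -
  have shift: "degree (Lstar d r s g + smult lam g) \<le> d" if "degree g \<le> d" for g
    unfolding Lstar_def
    by (intro degree_add_le degree_interp order.trans[OF degree_smult_le that])
  show ?thesis unfolding Lsq_def Let_def by (intro shift assms)
qed

lemma rep_matrix_Lsq_nonzero_iff: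
  assumes r: "r > -1" and s: "s > -1" and \<sigma>: "bij_betw \<sigma> {0..d} {0..d}"
    and ub: "\<forall>i\<le>d. ub i = ustar d r s (\<sigma> i)" and ij: "i \<le> d" "j \<le> d" "i \<noteq> j"
  shows "rep_matrix d (Lsq d r s lam) ub i j \<noteq> 0 \<longleftrightarrow>
    sq_adj (\<lambda>k. 2 * lam + astar d r s k + astar d r s (k + 1) \<noteq> 0) (\<sigma> i) (\<sigma> j)"
proof -
  define w where "w k = nu d r s / kstar d r s k" for k
  define T where "T = tridiag_apply d (bstar d r s) (\<lambda>k. astar d r s k + lam) (cstar d r s)"
  let ?unit = "\<lambda>k. if k = \<sigma> j then 1 else 0"
  have \<sigma>_le: "\<sigma> i \<le> d" "\<sigma> j \<le> d" "\<sigma> i \<noteq> \<sigma> j"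
    using \<sigma> ij by (auto simp: bij_betw_def inj_on_def)
  have w: "w k \<noteq> 0" if "k \<le> d" for k
    using that by (simp add: w_def nu_nonzero kstar_nonzero r s)
  have "rep_matrix d (Lsq d r s lam) ub i j = poly (Lsq d r s lam (ub j)) (th d r s (\<sigma> i)) / w (\<sigma> i)"
  proof (subst rep_matrix_lag_basis[OF r s \<sigma>, where w = w])
    show "degree (Lsq d r s lam (ub j')) \<le> d" if "j' \<le> d" for j'
      using that ub \<sigma> by (auto simp: ustar_def bij_betw_def
        intro!: degree_Lsq order.trans[OF degree_smult_le] degree_lag)
  qed (use ub ij w in \<open>auto simp: ustar_def w_def\<close>)
  also have "poly (Lsq d r s lam (ub j)) (th d r s (\<sigma> i)) = T (T (\<lambda>k. w (\<sigma> j) * ?unit k)) (\<sigma> i)"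
    unfolding poly_Lsq[OF r s \<sigma>_le(1)] T_def
    by (intro tridiag_apply_cong[OF \<sigma>_le(1)] tridiag_apply_cong)
      (use ub ij \<sigma>_le poly_ustar[OF r s] in \<open>auto simp: w_def\<close>)
  also have "\<dots> = w (\<sigma> j) * T (T ?unit) (\<sigma> i)"
    by (simp add: T_def tridiag_apply_scale)
  finally have "rep_matrix d (Lsq d r s lam) ub i j \<noteq> 0 \<longleftrightarrow> T (T ?unit) (\<sigma> i) \<noteq> 0"
    using w \<sigma>_le by simp
  also have "\<dots> \<longleftrightarrow> sq_adj (\<lambda>k. (astar d r s k + lam) + (astar d r s (k + 1) + lam) \<noteq> 0) (\<sigma> i) (\<sigma> j)"
    unfolding T_def using \<sigma>_le
    by (intro tridiag_apply_sq_unit_nonzero_iff) (auto simp: bstar_nonzero[OF r s] cstar_nonzero[OF r s])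
  finally show ?thesis by (simp add: algebra_simps)
qed

lemma irred_tridiag_iff_offdiag:
  "irred_tridiag d M \<longleftrightarrow> (\<forall>i\<le>d. \<forall>j\<le>d. i \<noteq> j \<longrightarrow> (M i j \<noteq> 0 \<longleftrightarrow> i + 1 = j \<or> j + 1 = i))"
proof
  assume M: "irred_tridiag d M"
  show "\<forall>i\<le>d. \<forall>j\<le>d. i \<noteq> j \<longrightarrow> (M i j \<noteq> 0 \<longleftrightarrow> i + 1 = j \<or> j + 1 = i)"
  proof (intro allI impI)
    fix i j assume ij: "i \<le> d" "j \<le> d" "i \<noteq> j"
    show "M i j \<noteq> 0 \<longleftrightarrow> i + 1 = j \<or> j + 1 = i"
    proof (cases "i + 1 = j \<or> j + 1 = i")
      case False
      then have "i + 1 < j \<or> j + 1 < i" using ij(3) by linarith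
      then show ?thesis using M ij False unfolding irred_tridiag_def by blast
    qed (use M ij in \<open>auto simp: irred_tridiag_def\<close>)
  qed
next
  assume A: "\<forall>i\<le>d. \<forall>j\<le>d. i \<noteq> j \<longrightarrow> (M i j \<noteq> 0 \<longleftrightarrow> i + 1 = j \<or> j + 1 = i)"
  show "irred_tridiag d M"
    unfolding irred_tridiag_def
  proof (intro conjI allI impI)
    fix i j assume "i \<le> d" "j \<le> d" "i + 1 < j \<or> j + 1 < i"
    then show "M i j = 0" using A[rule_format, of i j] by auto
  next
    fix i assume "i < d"
    then show "M (i + 1) i \<noteq> 0" "M i (i + 1) \<noteq> 0"
      using A[rule_format, of "i + 1" i] A[rule_format, of i "i + 1"] by auto
  qed
qed

definition path_ordering :: "nat \<Rightarrow> (nat \<Rightarrow> nat \<Rightarrow> bool) \<Rightarrow> (nat \<Rightarrow> nat) \<Rightarrow> bool" where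
  "path_ordering d E \<sigma> \<longleftrightarrow> (\<forall>i\<le>d. \<forall>j\<le>d. E (\<sigma> i) (\<sigma> j) \<longleftrightarrow> i + 1 = j \<or> j + 1 = i)"

lemma path_orderingD:
  "path_ordering d E \<sigma> \<Longrightarrow> i \<le> d \<Longrightarrow> j \<le> d \<Longrightarrow> E (\<sigma> i) (\<sigma> j) \<longleftrightarrow> i + 1 = j \<or> j + 1 = i"
  by (simp add: path_ordering_def)

lemma irred_tridiag_Lsq_iff:
  assumes r: "r > -1" and s: "s > -1" and \<sigma>: "bij_betw \<sigma> {0..d} {0..d}"
    and ub: "\<forall>i\<le>d. ub i = ustar d r s (\<sigma> i)"
  shows "irred_tridiag d (rep_matrix d (Lsq d r s lam) ub) \<longleftrightarrow>
    path_ordering d (sq_adj (\<lambda>k. 2 * lam + astar d r s k + astar d r s (k + 1) \<noteq> 0)) \<sigma>"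
proof -
  let ?D = "\<lambda>k. 2 * lam + astar d r s k + astar d r s (k + 1) \<noteq> 0"
  let ?M = "rep_matrix d (Lsq d r s lam) ub"
  have offdiag: "(?M i j \<noteq> 0 \<longleftrightarrow> i + 1 = j \<or> j + 1 = i)
      \<longleftrightarrow> (sq_adj ?D (\<sigma> i) (\<sigma> j) \<longleftrightarrow> i + 1 = j \<or> j + 1 = i)"
    if "i \<le> d" "j \<le> d" "i \<noteq> j" for i j
    using rep_matrix_Lsq_nonzero_iff[OF r s \<sigma> ub that] by simp
  show ?thesis
    unfolding irred_tridiag_iff_offdiag path_ordering_def
  proof (rule iffI; intro allI impI)
    fix i j assume "\<forall>i\<le>d. \<forall>j\<le>d. i \<noteq> j \<longrightarrow> (?M i j \<noteq> 0 \<longleftrightarrow> i + 1 = j \<or> j + 1 = i)" "i \<le> d" "j \<le> d"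
    then show "sq_adj ?D (\<sigma> i) (\<sigma> j) \<longleftrightarrow> i + 1 = j \<or> j + 1 = i"
      using offdiag[of i j] sq_adj_irrefl by (cases "i = j") simp_all
  next
    fix i j assume "\<forall>i\<le>d. \<forall>j\<le>d. sq_adj ?D (\<sigma> i) (\<sigma> j) \<longleftrightarrow> i + 1 = j \<or> j + 1 = i"
      "i \<le> d" "j \<le> d" "i \<noteq> j"
    then show "?M i j \<noteq> 0 \<longleftrightarrow> i + 1 = j \<or> j + 1 = i"
      using offdiag[of i j] by simp
  qed
qed

lemma path_ordering_neighbour:
  assumes \<sigma>: "bij_betw \<sigma> {0..d} {0..d}" and path: "path_ordering d E \<sigma>"
    and "p \<le> d" "x \<le> d" "E (\<sigma> p) x"
  shows "x = \<sigma> (p + 1) \<or> x = \<sigma> (p - 1)"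
proof -
  obtain q where "q \<le> d" "x = \<sigma> q"
    using \<sigma> \<open>x \<le> d\<close> by (metis atLeastAtMost_iff bij_betw_iff_bijections le0)
  moreover have "p + 1 = q \<or> q + 1 = p"
    using path_orderingD[OF path \<open>p \<le> d\<close> \<open>q \<le> d\<close>] \<open>E (\<sigma> p) x\<close> \<open>x = \<sigma> q\<close> by simp
  ultimately show ?thesis by auto
qed

lemma path_ordering_invariant:
  assumes path: "path_ordering d E \<sigma>" and \<sigma>: "\<And>i. i \<le> d \<Longrightarrow> \<sigma> i \<le> d"
    and P: "\<And>m k. m \<le> d \<Longrightarrow> k \<le> d \<Longrightarrow> E m k \<Longrightarrow> P m \<longleftrightarrow> P k"
    and "i \<le> d"
  shows "P (\<sigma> i) \<longleftrightarrow> P (\<sigma> 0)"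
  using \<open>i \<le> d\<close>
proof (induction i)
  case (Suc i)
  have "E (\<sigma> i) (\<sigma> (i + 1))" using path_orderingD[OF path, of i "i + 1"] Suc.prems by simp
  then have "P (\<sigma> i) \<longleftrightarrow> P (\<sigma> (i + 1))" using P \<sigma> Suc.prems by simp
  then show ?case using Suc by simp
qed simp

lemma path_ordering_map:
  assumes "\<And>m k. m \<le> d \<Longrightarrow> k \<le> d \<Longrightarrow> E m k \<longleftrightarrow> E' (f m) (f k)" and "\<And>i. i \<le> d \<Longrightarrow> \<sigma> i \<le> d"
  shows "path_ordering d E \<sigma> \<longleftrightarrow> path_ordering d E' (\<lambda>i. f (\<sigma> i))"
  using assms by (simp add: path_ordering_def)

lemma path_ordering_cong:
  "(\<And>i. i \<le> d \<Longrightarrow> \<sigma> i = \<rho> i) \<Longrightarrow> path_ordering d E \<sigma> \<longleftrightarrow> path_ordering d E \<rho>"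
  by (simp add: path_ordering_def)

lemma path_ordering_rev:
  "path_ordering d E \<sigma> \<Longrightarrow> path_ordering d E (\<lambda>i. \<sigma> (d - i))"
  unfolding path_ordering_def
proof (intro allI impI)
  fix i j assume path: "\<forall>i\<le>d. \<forall>j\<le>d. E (\<sigma> i) (\<sigma> j) \<longleftrightarrow> i + 1 = j \<or> j + 1 = i"
    and "i \<le> d" "j \<le> d"
  then have "E (\<sigma> (d - i)) (\<sigma> (d - j)) \<longleftrightarrow> d - i + 1 = d - j \<or> d - j + 1 = d - i"
    by simp
  also have "\<dots> \<longleftrightarrow> i + 1 = j \<or> j + 1 = i"
    using \<open>i \<le> d\<close> \<open>j \<le> d\<close> by arith
  finally show "E (\<sigma> (d - i)) (\<sigma> (d - j)) \<longleftrightarrow> i + 1 = j \<or> j + 1 = i" .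
qed

lemma unit_steps_increasing:
  fixes \<phi> :: "nat \<Rightarrow> nat"
  assumes inj: "inj_on \<phi> {0..d}" and le: "\<And>i. i \<le> d \<Longrightarrow> \<phi> i \<le> d"
    and steps: "\<And>i. i < d \<Longrightarrow> \<phi> (i + 1) = \<phi> i + 1 \<or> \<phi> i = \<phi> (i + 1) + 1"
    and first: "0 < d \<Longrightarrow> \<phi> 1 = \<phi> 0 + 1"
  shows "\<forall>i\<le>d. \<phi> i = i"
proof -
  have lin: "\<phi> i = \<phi> 0 + i" if "i \<le> d" for i
    using that
  proof (induction i rule: less_induct)
    case (less i)
    consider "i = 0" | "i = 1" | "2 \<le> i" by linarith
    then show ?case
    proof cases
      case 2
      then show ?thesis using first less.prems by simp
    next
      case 3
      have "\<phi> (i - 1) = \<phi> 0 + (i - 1)" "\<phi> (i - 2) = \<phi> 0 + (i - 2)"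
        using less.IH[of "i - 1"] less.IH[of "i - 2"] less.prems 3 by simp_all
      moreover have "\<phi> i \<noteq> \<phi> (i - 2)"
      proof
        assume "\<phi> i = \<phi> (i - 2)"
        then have "i = i - 2" using inj_onD[OF inj] less.prems by simp
        then show False using 3 by simp
      qed
      moreover have "\<phi> i = \<phi> (i - 1) + 1 \<or> \<phi> (i - 1) = \<phi> i + 1"
        using steps[of "i - 1"] less.prems 3 by simp
      ultimately show ?thesis using 3 by linarith
    qed simp
  qed
  have "\<phi> 0 = 0" using lin[of d] le[of d] by simp
  then show ?thesis using lin by (metis add_0)
qed

lemma unit_steps_id_or_rev:
  fixes \<phi> :: "nat \<Rightarrow> nat"
  assumes inj: "inj_on \<phi> {0..d}" and le: "\<And>i. i \<le> d \<Longrightarrow> \<phi> i \<le> d"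
    and steps: "\<And>i. i < d \<Longrightarrow> \<phi> (i + 1) = \<phi> i + 1 \<or> \<phi> i = \<phi> (i + 1) + 1"
  shows "(\<forall>i\<le>d. \<phi> i = i) \<or> (\<forall>i\<le>d. \<phi> i = d - i)"
proof (cases "0 < d \<longrightarrow> \<phi> 1 = \<phi> 0 + 1")
  case True
  then have first: "0 < d \<Longrightarrow> \<phi> 1 = \<phi> 0 + 1" by simp
  show ?thesis using unit_steps_increasing[OF inj le steps first] ..
next
  case False
  have rev: "\<forall>i\<le>d. d - \<phi> i = i"
  proof (rule unit_steps_increasing)
    show "inj_on (\<lambda>i. d - \<phi> i) {0..d}"
    proof (rule inj_onI)
      fix x y assume "x \<in> {0..d}" "y \<in> {0..d}" "d - \<phi> x = d - \<phi> y"
      then have "\<phi> x = \<phi> y" using le[of x] le[of y] by simp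
      then show "x = y" using inj_onD[OF inj] \<open>x \<in> {0..d}\<close> \<open>y \<in> {0..d}\<close> by blast
    qed
    show "d - \<phi> (i + 1) = d - \<phi> i + 1 \<or> d - \<phi> i = d - \<phi> (i + 1) + 1" if "i < d" for i
      using steps[OF that] le[of i] le[of "i + 1"] that by arith
    show "d - \<phi> 1 = d - \<phi> 0 + 1" if "0 < d"
    proof -
      have "\<phi> 0 = \<phi> 1 + 1" using False steps[of 0] that by auto
      then show ?thesis using le[of 0] that by arith
    qed
  qed simp
  have "\<forall>i\<le>d. \<phi> i = d - i"
  proof (intro allI impI)
    fix i assume "i \<le> d"
    moreover have "d - \<phi> i = i" using rev \<open>i \<le> d\<close> by simp
    ultimately show "\<phi> i = d - i" using le[of i] by arith
  qed
  then show ?thesis ..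
qed

lemma path_ordering_unique:
  assumes \<sigma>: "bij_betw \<sigma> {0..d} {0..d}" and \<rho>: "bij_betw \<rho> {0..d} {0..d}"
    and "path_ordering d E \<sigma>" "path_ordering d E \<rho>"
  shows "(\<forall>i\<le>d. \<sigma> i = \<rho> i) \<or> (\<forall>i\<le>d. \<sigma> i = \<rho> (d - i))"
proof -
  define \<phi> where "\<phi> i = inv_into {0..d} \<rho> (\<sigma> i)" for i
  have \<phi>: "bij_betw \<phi> {0..d} {0..d}"
    unfolding \<phi>_def using bij_betw_trans[OF \<sigma> bij_betw_inv_into[OF \<rho>]] by (simp add: comp_def)
  have \<sigma>_eq: "\<sigma> i = \<rho> (\<phi> i)" if "i \<le> d" for i
  proof -
    have "\<sigma> i \<in> \<rho> ` {0..d}" using \<sigma> \<rho> that by (auto simp: bij_betw_def)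
    then show ?thesis by (simp add: \<phi>_def f_inv_into_f)
  qed
  have "(\<forall>i\<le>d. \<phi> i = i) \<or> (\<forall>i\<le>d. \<phi> i = d - i)"
  proof (rule unit_steps_id_or_rev)
    show "inj_on \<phi> {0..d}" using \<phi> by (simp add: bij_betw_def)
    show le: "\<phi> i \<le> d" if "i \<le> d" for i using \<phi> that by (auto simp: bij_betw_def)
    show "\<phi> (i + 1) = \<phi> i + 1 \<or> \<phi> i = \<phi> (i + 1) + 1" if "i < d" for i
    proof -
      have "E (\<rho> (\<phi> i)) (\<rho> (\<phi> (i + 1)))"
        using path_orderingD[OF \<open>path_ordering d E \<sigma>\<close>, of i "i + 1"] that \<sigma>_eq[of i] \<sigma>_eq[of "i + 1"]
        by simp
      then show ?thesis
        using path_orderingD[OF \<open>path_ordering d E \<rho>\<close>, of "\<phi> i" "\<phi> (i + 1)"] le[of i] le[of "i + 1"] that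
        by auto
    qed
  qed
  then show ?thesis using \<sigma>_eq by auto
qed

definition zigzag :: "nat \<Rightarrow> nat \<Rightarrow> nat" where
  "zigzag d i = (if 2 * i \<le> d then 2 * i else 2 * (d - i) + 1)"

lemma zigzag_le: "i \<le> d \<Longrightarrow> zigzag d i \<le> d"
  by (simp add: zigzag_def) arith

lemma bij_betw_zigzag: "bij_betw (zigzag d) {0..d} {0..d}"
proof -
  have "inj_on (zigzag d) {0..d}"
    by (rule inj_onI) (auto simp: zigzag_def split: if_splits; presburger)
  moreover have "zigzag d ` {0..d} \<subseteq> {0..d}" using zigzag_le by auto
  ultimately show ?thesis
    by (simp add: bij_betw_def endo_inj_surj)
qed

lemma zigzag_path_ordering: "path_ordering d (sq_adj (\<lambda>m. m + 1 = d)) (zigzag d)"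
  unfolding path_ordering_def sq_adj_def zigzag_def
  by (auto split: if_splits; presburger)

lemma zigzag_path_orderings:
  assumes \<sigma>: "bij_betw \<sigma> {0..d} {0..d}"
  shows "path_ordering d (sq_adj (\<lambda>m. m + 1 = d)) \<sigma> \<longleftrightarrow>
    (\<forall>i\<le>d. \<sigma> i = zigzag d i) \<or> (\<forall>i\<le>d. \<sigma> i = zigzag d (d - i))"
proof
  assume "path_ordering d (sq_adj (\<lambda>m. m + 1 = d)) \<sigma>"
  then show "(\<forall>i\<le>d. \<sigma> i = zigzag d i) \<or> (\<forall>i\<le>d. \<sigma> i = zigzag d (d - i))"
    using path_ordering_unique[OF \<sigma> bij_betw_zigzag _ zigzag_path_ordering] by blast
next
  assume "(\<forall>i\<le>d. \<sigma> i = zigzag d i) \<or> (\<forall>i\<le>d. \<sigma> i = zigzag d (d - i))"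
  then show "path_ordering d (sq_adj (\<lambda>m. m + 1 = d)) \<sigma>"
    using path_ordering_cong[of d \<sigma>] zigzag_path_ordering path_ordering_rev[OF zigzag_path_ordering]
    by metis
qed

lemma zigzag_piecewise:
  assumes "i \<le> d"
  shows "zigzag d i = (if i \<le> d div 2 then 2 * i else 2 * (d - i) + 1)"
    and "zigzag d (d - i) = (if i < (d + 1) div 2 then 2 * i + 1 else 2 * (d - i))"
    and "d - zigzag d i = (if i \<le> d div 2 then d - 2 * i else 2 * i - d - 1)"
    and "d - zigzag d (d - i) = (if i < (d + 1) div 2 then d - 2 * i - 1 else 2 * i - d)"
proof -
  have half: "i \<le> d div 2 \<longleftrightarrow> 2 * i \<le> d" "i < (d + 1) div 2 \<longleftrightarrow> 2 * i < d" by presburger+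
  show "zigzag d i = (if i \<le> d div 2 then 2 * i else 2 * (d - i) + 1)"
    and "zigzag d (d - i) = (if i < (d + 1) div 2 then 2 * i + 1 else 2 * (d - i))"
    and "d - zigzag d i = (if i \<le> d div 2 then d - 2 * i else 2 * i - d - 1)"
    and "d - zigzag d (d - i) = (if i < (d + 1) div 2 then d - 2 * i - 1 else 2 * i - d)"
    unfolding zigzag_def half using assms by auto
qed

lemma sq_adj_cong:
  "(\<And>i. i < d \<Longrightarrow> D i \<longleftrightarrow> D' i) \<Longrightarrow> m \<le> d \<Longrightarrow> k \<le> d \<Longrightarrow> sq_adj D m k \<longleftrightarrow> sq_adj D' m k"
  unfolding sq_adj_def by auto

lemma sq_adj_reflect:
  assumes "m \<le> d" "k \<le> d"
  shows "sq_adj D m k \<longleftrightarrow> sq_adj (\<lambda>i. D (d - 1 - i)) (d - m) (d - k)"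
proof -
  have "m + 2 = k \<longleftrightarrow> d - k + 2 = d - m" "k + 2 = m \<longleftrightarrow> d - m + 2 = d - k"
    "m + 1 = k \<longleftrightarrow> d - k + 1 = d - m" "k + 1 = m \<longleftrightarrow> d - m + 1 = d - k"
    using assms by arith+
  moreover have "d - 1 - (d - k) = m" if "m + 1 = k" using that assms by arith
  moreover have "d - 1 - (d - m) = k" if "k + 1 = m" using that assms by arith
  ultimately show ?thesis unfolding sq_adj_def by auto
qed

lemma sq_adj_two_neighbours:
  assumes "D 0" "D (d - 1)" "2 \<le> d" "v \<le> d"
  obtains x y where "x \<le> d" "y \<le> d" "x \<noteq> y" "sq_adj D v x" "sq_adj D v y"
proof -
  define w where "w = v - 2"
  consider "v = 0" | "v = 1" "d = 2" | "v = 1" "3 \<le> d" | "v = w + 2" "w + 4 \<le> d"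
    | "v = w + 2" "w + 3 = d" | "v = w + 2" "w + 2 = d"
    unfolding w_def using assms(3,4) by arith
  then show thesis
  proof cases
    case 1
    then show thesis using that[of 1 2] assms by (simp add: sq_adj_def)
  next
    case 2
    then show thesis using that[of 0 2] assms by (simp add: sq_adj_def)
  next
    case 3
    then show thesis using that[of 0 3] assms by (simp add: sq_adj_def)
  next
    case 4
    then show thesis using that[of w "w + 4"] by (simp add: sq_adj_def)
  next
    case 5
    moreover have "D (w + 2)" using assms(2) unfolding 5(2)[symmetric] by simp
    ultimately show thesis using that[of w "w + 3"] by (simp add: sq_adj_def)
  next
    case 6
    moreover have "D (w + 1)" using assms(2) unfolding 6(2)[symmetric] by simp
    ultimately show thesis using that[of w "w + 1"] by (simp add: sq_adj_def)
  qed
qed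

text \<open>The hypothesis on \<open>d = 3\<close> rules out \<open>D \<inter> {0..<3} = {1}\<close>, whose graph is the path
  \<open>0 - 2 - 1 - 3\<close>.\<close>

lemma sq_adj_path_support:
  assumes d: "1 \<le> d" and \<sigma>: "bij_betw \<sigma> {0..d} {0..d}" and path: "path_ordering d (sq_adj D) \<sigma>"
    and d3: "d = 3 \<Longrightarrow> D 1 \<Longrightarrow> D 0 \<or> D 2"
  shows "(D (d - 1) \<and> (\<forall>i. i + 2 \<le> d \<longrightarrow> \<not> D i)) \<or> (D 0 \<and> (\<forall>i. 1 \<le> i \<and> i + 1 \<le> d \<longrightarrow> \<not> D i))"
proof -
  have \<sigma>_le: "\<sigma> i \<le> d" if "i \<le> d" for i using \<sigma> that by (auto simp: bij_betw_def)
  have onto: "\<exists>p\<le>d. \<sigma> p = v" if "v \<le> d" for v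
    using \<sigma> that by (metis atLeastAtMost_iff bij_betw_iff_bijections le0)
  have deg: False
    if "v \<le> d" "x \<le> d" "y \<le> d" "z \<le> d" "x \<noteq> y" "x \<noteq> z" "y \<noteq> z"
      "sq_adj D v x" "sq_adj D v y" "sq_adj D v z" for v x y z
  proof -
    obtain p where "p \<le> d" "\<sigma> p = v" using onto \<open>v \<le> d\<close> by blast
    then show False
      using path_ordering_neighbour[OF \<sigma> path, of p] that by metis
  qed
  have interior: "\<not> D i" if i: "1 \<le> i" "i + 2 \<le> d" for i
  proof
    assume "D i"
    consider "2 \<le> i" | "i = 1" "4 \<le> d" | "i = 1" "d = 3" using i by linarith
    then show False
    proof cases
      case 1
      then have "i - 2 + 2 = i" by simp
      then show False using deg[of i "i - 2" "i + 1" "i + 2"] i \<open>D i\<close> by (simp add: sq_adj_def)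
    next
      case 2
      then show False using deg[of 2 0 1 4] \<open>D i\<close> by (simp add: sq_adj_def)
    next
      case 3
      then have "D 0 \<or> D 2" using d3 \<open>D i\<close> by simp
      then show False
        using deg[of 1 0 2 3] deg[of 2 0 1 3] 3 \<open>D i\<close> by (auto simp: sq_adj_def)
    qed
  qed
  have ends: "D 0 \<or> D (d - 1)"
  proof (rule ccontr)
    assume "\<not> (D 0 \<or> D (d - 1))"
    then have "\<not> D i" if "i < d" for i
      using interior[of i] that by (cases "i = 0"; cases "i = d - 1") auto
    then have parity: "even m \<longleftrightarrow> even k" if "m \<le> d" "k \<le> d" "sq_adj D m k" for m k
      using that by (auto simp: sq_adj_def)
    have "even (\<sigma> i) \<longleftrightarrow> even (\<sigma> 0)" if "i \<le> d" for i
      using path_ordering_invariant[where P = even, OF path \<sigma>_le parity that] .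
    moreover obtain p where "p \<le> d" "\<sigma> p = 0" using onto[of 0] by auto
    moreover obtain q where "q \<le> d" "\<sigma> q = 1" using onto[of 1] d by auto
    ultimately show False by (metis even_zero odd_one)
  qed
  have not_both: False if D0: "D 0" and D1: "D (d - 1)" and d2: "2 \<le> d"
  proof -
    obtain x y where "x \<le> d" "y \<le> d" "x \<noteq> y" "sq_adj D (\<sigma> 0) x" "sq_adj D (\<sigma> 0) y"
      using sq_adj_two_neighbours[OF D0 D1 d2 \<sigma>_le[OF le0]] by blast
    moreover have "x = \<sigma> 1" if "x \<le> d" "sq_adj D (\<sigma> 0) x" for x
      using path_ordering_neighbour[OF \<sigma> path _ that] sq_adj_irrefl[of D "\<sigma> 0"] that(2) by auto
    ultimately show False by metis
  qed
  show ?thesis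
  proof (cases "D 0 \<and> 2 \<le> d")
    case True
    then have "\<not> D (d - 1)" using not_both by blast
    have "\<not> D i" if "1 \<le> i" "i + 1 \<le> d" for i
    proof (cases "i + 2 \<le> d")
      case False
      then have "i = d - 1" using that by linarith
      then show ?thesis using \<open>\<not> D (d - 1)\<close> by simp
    next
      case True
      then show ?thesis using interior that by simp
    qed
    then show ?thesis using True by blast
  next
    case False
    have "D (d - 1)"
    proof (cases "D 0")
      case True
      then have "d = 1" using False d by linarith
      then show ?thesis using True by simp
    next
      case False
      then show ?thesis using ends by simp
    qed
    moreover have "\<not> D i" if "i + 2 \<le> d" for i
      using interior[of i] that False by (cases "i = 0") auto
    ultimately show ?thesis by blast
  qed
qed

lemma sq_adj_path_ordering_iff:
  assumes d: "1 \<le> d" and \<sigma>: "bij_betw \<sigma> {0..d} {0..d}"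
    and d3: "d = 3 \<Longrightarrow> D 1 \<Longrightarrow> D 0 \<or> D 2"
  shows "path_ordering d (sq_adj D) \<sigma> \<longleftrightarrow>
    (D (d - 1) \<and> (\<forall>i. i + 2 \<le> d \<longrightarrow> \<not> D i)
      \<and> ((\<forall>i\<le>d. \<sigma> i = zigzag d i) \<or> (\<forall>i\<le>d. \<sigma> i = zigzag d (d - i))))
    \<or> (D 0 \<and> (\<forall>i. 1 \<le> i \<and> i + 1 \<le> d \<longrightarrow> \<not> D i)
      \<and> ((\<forall>i\<le>d. \<sigma> i = d - zigzag d i) \<or> (\<forall>i\<le>d. \<sigma> i = d - zigzag d (d - i))))"
proof -
  have \<sigma>_le: "\<sigma> i \<le> d" if "i \<le> d" for i using \<sigma> that by (auto simp: bij_betw_def)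
  have last: "path_ordering d (sq_adj D) \<sigma> \<longleftrightarrow>
      (\<forall>i\<le>d. \<sigma> i = zigzag d i) \<or> (\<forall>i\<le>d. \<sigma> i = zigzag d (d - i))"
    if "D (d - 1)" "\<forall>i. i + 2 \<le> d \<longrightarrow> \<not> D i"
  proof -
    have D: "D i \<longleftrightarrow> i + 1 = d" if "i < d" for i
      using that \<open>D (d - 1)\<close> \<open>\<forall>i. i + 2 \<le> d \<longrightarrow> \<not> D i\<close>
      by (cases "i + 1 = d") auto
    have adj: "sq_adj D m k \<longleftrightarrow> sq_adj (\<lambda>i. i + 1 = d) m k" if "m \<le> d" "k \<le> d" for m k
      by (rule sq_adj_cong[OF D that])
    have "path_ordering d (sq_adj D) \<sigma> \<longleftrightarrow> path_ordering d (sq_adj (\<lambda>i. i + 1 = d)) \<sigma>"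
      using path_ordering_map[where f = "\<lambda>m. m", OF adj \<sigma>_le] by simp
    then show ?thesis using zigzag_path_orderings[OF \<sigma>] by simp
  qed
  have first: "path_ordering d (sq_adj D) \<sigma> \<longleftrightarrow>
      (\<forall>i\<le>d. \<sigma> i = d - zigzag d i) \<or> (\<forall>i\<le>d. \<sigma> i = d - zigzag d (d - i))"
    if "D 0" "\<forall>i. 1 \<le> i \<and> i + 1 \<le> d \<longrightarrow> \<not> D i"
  proof -
    have "D (d - 1 - i) \<longleftrightarrow> i + 1 = d" if "i < d" for i
    proof (cases "i + 1 = d")
      case False
      then have "1 \<le> d - 1 - i \<and> d - 1 - i + 1 \<le> d" using \<open>i < d\<close> by arith
      then show ?thesis using False \<open>\<forall>i. 1 \<le> i \<and> i + 1 \<le> d \<longrightarrow> \<not> D i\<close> by blast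
    qed (use \<open>D 0\<close> in simp)
    then have "sq_adj D m k \<longleftrightarrow> sq_adj (\<lambda>i. i + 1 = d) (d - m) (d - k)" if "m \<le> d" "k \<le> d" for m k
      using sq_adj_reflect[OF that] sq_adj_cong[of d "\<lambda>i. D (d - 1 - i)"] that by simp
    then have "path_ordering d (sq_adj D) \<sigma> \<longleftrightarrow> path_ordering d (sq_adj (\<lambda>i. i + 1 = d)) (\<lambda>i. d - \<sigma> i)"
      using path_ordering_map \<sigma>_le by blast
    also have "\<dots> \<longleftrightarrow> (\<forall>i\<le>d. d - \<sigma> i = zigzag d i) \<or> (\<forall>i\<le>d. d - \<sigma> i = zigzag d (d - i))"
    proof (rule zigzag_path_orderings)
      have "bij_betw (\<lambda>m. d - m) {0..d} {0..d}"
        by (rule bij_betw_byWitness[where f' = "\<lambda>m. d - m"]) auto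
      then show "bij_betw (\<lambda>i. d - \<sigma> i) {0..d} {0..d}"
        using bij_betw_trans[OF \<sigma>] by (simp add: comp_def)
    qed
    also have "\<dots> \<longleftrightarrow> (\<forall>i\<le>d. \<sigma> i = d - zigzag d i) \<or> (\<forall>i\<le>d. \<sigma> i = d - zigzag d (d - i))"
      using \<sigma>_le zigzag_le by (metis diff_diff_cancel diff_le_self)
    finally show ?thesis .
  qed
  show ?thesis
    using sq_adj_path_support[OF d \<sigma> _ d3] last first by blast
qed

lemma astar_3:
  fixes r s :: real
  assumes "r + s + 4 \<noteq> 0"
  shows "astar 3 r s 0 = 3 * (s + 3) / (r + s + 6)"
    and "astar 3 r s 1 = 2 * (s + 2) * (r + s + 6) / ((r + s + 4) * (r + s + 5))
      + (r + 3) * (r + s + 3) / ((r + s + 5) * (r + s + 6))"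
    and "astar 3 r s 2 = (s + 1) * (r + s + 5) / ((r + s + 2) * (r + s + 3))
      + 2 * (r + 2) * (r + s + 2) / ((r + s + 3) * (r + s + 4))"
    and "astar 3 r s 3 = 3 * (r + 1) / (r + s + 2)"
proof -
  note simps = bstar_def cstar_def eval_nat_numeral pochhammer_Suc algebra_simps minus_divide_left
  have b: "bstar 3 r s 0 = - (3 * (s + 3) / (r + s + 6))"
    "bstar 3 r s 1 = - (2 * (s + 2) * (r + s + 6) / ((r + s + 4) * (r + s + 5)))"
    "cstar 3 r s 2 = - (2 * (r + 2) * (r + s + 2) / ((r + s + 3) * (r + s + 4)))"
    "cstar 3 r s 3 = - (3 * (r + 1) / (r + s + 2))"
    by (simp_all add: simps)
  have "bstar 3 r s 2 = - ((s + 1) * (r + s + 5) * (r + s + 4) / ((r + s + 2) * (r + s + 3) * (r + s + 4)))"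
    by (simp add: simps)
  then have b2: "bstar 3 r s 2 = - ((s + 1) * (r + s + 5) / ((r + s + 2) * (r + s + 3)))"
    using assms by simp
  have "cstar 3 r s 1 = - ((r + 3) * (r + s + 3) * (r + s + 4) / ((r + s + 5) * (r + s + 6) * (r + s + 4)))"
    by (simp add: simps)
  then have c1: "cstar 3 r s 1 = - ((r + 3) * (r + s + 3) / ((r + s + 5) * (r + s + 6)))"
    using assms by simp
  have bc: "bstar 3 r s 3 = 0" "cstar 3 r s 0 = 0" by (simp_all add: bstar_def cstar_def)
  show "astar 3 r s 0 = 3 * (s + 3) / (r + s + 6)"
    and "astar 3 r s 1 = 2 * (s + 2) * (r + s + 6) / ((r + s + 4) * (r + s + 5))
      + (r + 3) * (r + s + 3) / ((r + s + 5) * (r + s + 6))"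
    and "astar 3 r s 2 = (s + 1) * (r + s + 5) / ((r + s + 2) * (r + s + 3))
      + 2 * (r + 2) * (r + s + 2) / ((r + s + 3) * (r + s + 4))"
    and "astar 3 r s 3 = 3 * (r + 1) / (r + s + 2)"
    unfolding astar_def thstar_def b b2 c1 bc by simp_all
qed

lemma astar_3_alternating_sum:
  fixes r s :: real
  assumes "r > -1" "s > -1"
  shows "astar 3 r s 0 + astar 3 r s 1 - astar 3 r s 2 - astar 3 r s 3 = 4 * (s - r) / (r + s + 4)"
proof -
  obtain t u1 u2 u3 u4 where u: "r + s + 2 = t" "r + s + 3 = u1" "r + s + 4 = u2" "r + s + 5 = u3"
    "r + s + 6 = u4" by blast
  then have r: "r = t - s - 2" and u': "u1 = t + 1" "u2 = t + 2" "u3 = t + 3" "u4 = t + 4" by auto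
  have "t > 0" using assms u by linarith
  then have "t \<noteq> 0" "u1 \<noteq> 0" "u2 \<noteq> 0" "u3 \<noteq> 0" "u4 \<noteq> 0" using u' by linarith+
  then show ?thesis
    unfolding astar_3[OF \<open>u2 \<noteq> 0\<close>[folded u(3)]] u
    by (simp add: field_simps) (simp add: r u' algebra_simps)
qed

lemma astar_3_symmetric:
  fixes r :: real
  assumes "r > -1"
  shows "astar 3 r r 0 = astar 3 r r 2"
proof -
  obtain u2 u3 u4 u5 u6 where u: "r + r + 2 = u2" "r + r + 3 = u3" "r + r + 4 = u4" "r + r + 5 = u5"
    "r + r + 6 = u6" by blast
  have "u2 > 0" using assms u by linarith
  then have "u2 \<noteq> 0" "u3 \<noteq> 0" "u4 \<noteq> 0" "u5 \<noteq> 0" "u6 \<noteq> 0" using u by linarith+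
  then show ?thesis
    unfolding astar_3[OF \<open>u4 \<noteq> 0\<close>[folded u(3)]] u
    by (simp add: field_simps) (simp add: u[symmetric] algebra_simps)
qed

lemma astar_3_adjacent_sums:
  fixes r s lam :: real
  assumes "r > -1" "s > -1" "2 * lam + astar 3 r s 1 + astar 3 r s 2 \<noteq> 0"
  shows "2 * lam + astar 3 r s 0 + astar 3 r s 1 \<noteq> 0 \<or> 2 * lam + astar 3 r s 2 + astar 3 r s 3 \<noteq> 0"
proof (rule ccontr)
  assume "\<not> ?thesis"
  then have sums: "2 * lam + astar 3 r s 0 + astar 3 r s 1 = 0" "2 * lam + astar 3 r s 2 + astar 3 r s 3 = 0"
    by auto
  then have "4 * (s - r) / (r + s + 4) = 0" using astar_3_alternating_sum[OF assms(1,2)] by linarith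
  moreover have "r + s + 4 > 0" using assms by linarith
  ultimately have "s = r" by simp
  then have "astar 3 r s 0 = astar 3 r s 2" using astar_3_symmetric[OF assms(1)] by simp
  then show False using sums assms(3) by simp
qed

lemma ustar_piecewise_iff:
  assumes r: "r > -1" and s: "s > -1" and ub: "\<forall>i\<le>d. ub i = ustar d r s (\<sigma> i)"
    and \<sigma>: "\<And>i. i \<le> d \<Longrightarrow> \<sigma> i \<le> d"
    and f: "\<And>i. i \<le> d \<Longrightarrow> f i = (if P i then g i else h i)" and f_le: "\<And>i. i \<le> d \<Longrightarrow> f i \<le> d"
    and P: "\<And>i. P i \<Longrightarrow> i \<le> d" and Q: "\<And>i. i \<le> d \<Longrightarrow> Q i \<longleftrightarrow> \<not> P i"
  shows "((\<forall>i. P i \<longrightarrow> ub i = ustar d r s (g i)) \<and> (\<forall>i. Q i \<and> i \<le> d \<longrightarrow> ub i = ustar d r s (h i)))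
    \<longleftrightarrow> (\<forall>i\<le>d. \<sigma> i = f i)"
proof -
  have "((\<forall>i. P i \<longrightarrow> ub i = ustar d r s (g i)) \<and> (\<forall>i. Q i \<and> i \<le> d \<longrightarrow> ub i = ustar d r s (h i)))
      \<longleftrightarrow> (\<forall>i\<le>d. ub i = ustar d r s (f i))"
  proof
    assume pieces: "(\<forall>i. P i \<longrightarrow> ub i = ustar d r s (g i)) \<and> (\<forall>i. Q i \<and> i \<le> d \<longrightarrow> ub i = ustar d r s (h i))"
    show "\<forall>i\<le>d. ub i = ustar d r s (f i)"
    proof (intro allI impI)
      fix i assume "i \<le> d"
      then show "ub i = ustar d r s (f i)" using pieces f[of i] Q[of i] by (cases "P i") simp_all
    qed
  next
    assume all: "\<forall>i\<le>d. ub i = ustar d r s (f i)"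
    show "(\<forall>i. P i \<longrightarrow> ub i = ustar d r s (g i)) \<and> (\<forall>i. Q i \<and> i \<le> d \<longrightarrow> ub i = ustar d r s (h i))"
    proof (intro conjI allI impI)
      fix i assume "P i"
      then show "ub i = ustar d r s (g i)" using all f[of i] P[of i] by simp
    next
      fix i assume "Q i \<and> i \<le> d"
      then show "ub i = ustar d r s (h i)" using all f[of i] Q[of i] by simp
    qed
  qed
  also have "\<dots> \<longleftrightarrow> (\<forall>i\<le>d. \<sigma> i = f i)"
    using ub \<sigma> f_le ustar_eq_iff[OF r s] by simp
  finally show ?thesis .
qed

lemma ustar_zigzag_orderings:
  assumes r: "r > -1" and s: "s > -1" and ub: "\<forall>i\<le>d. ub i = ustar d r s (\<sigma> i)"
    and \<sigma>: "\<And>i. i \<le> d \<Longrightarrow> \<sigma> i \<le> d"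
  shows "((\<forall>i. i \<le> d div 2 \<longrightarrow> ub i = ustar d r s (2 * i))
        \<and> (\<forall>i. d div 2 + 1 \<le> i \<and> i \<le> d \<longrightarrow> ub i = ustar d r s (2 * (d - i) + 1)))
      \<longleftrightarrow> (\<forall>i\<le>d. \<sigma> i = zigzag d i)"
    and "((\<forall>i. i < (d + 1) div 2 \<longrightarrow> ub i = ustar d r s (2 * i + 1))
        \<and> (\<forall>i. (d + 1) div 2 \<le> i \<and> i \<le> d \<longrightarrow> ub i = ustar d r s (2 * (d - i))))
      \<longleftrightarrow> (\<forall>i\<le>d. \<sigma> i = zigzag d (d - i))"
    and "((\<forall>i. i \<le> d div 2 \<longrightarrow> ub i = ustar d r s (d - 2 * i))
        \<and> (\<forall>i. d div 2 + 1 \<le> i \<and> i \<le> d \<longrightarrow> ub i = ustar d r s (2 * i - d - 1)))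
      \<longleftrightarrow> (\<forall>i\<le>d. \<sigma> i = d - zigzag d i)"
    and "((\<forall>i. i < (d + 1) div 2 \<longrightarrow> ub i = ustar d r s (d - 2 * i - 1))
        \<and> (\<forall>i. (d + 1) div 2 \<le> i \<and> i \<le> d \<longrightarrow> ub i = ustar d r s (2 * i - d)))
      \<longleftrightarrow> (\<forall>i\<le>d. \<sigma> i = d - zigzag d (d - i))"
  by (intro ustar_piecewise_iff[OF r s ub \<sigma>] zigzag_piecewise zigzag_le; simp; linarith)+

theorem proposition2p5:
  fixes d :: nat and r s lam :: real and ub :: "nat \<Rightarrow> real poly"
  assumes "r > -1" and "s > -1" and "d \<ge> 1"
    and "\<exists>\<sigma>. bij_betw \<sigma> {0..d} {0..d} \<and> (\<forall>i\<le>d. ub i = ustar d r s (\<sigma> i))"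
  shows "irred_tridiag d (rep_matrix d (Lsq d r s lam) ub) \<longleftrightarrow>
    ((2 * lam + astar d r s (d - 1) + astar d r s d \<noteq> 0
      \<and> (\<forall>i. i + 2 \<le> d \<longrightarrow> 2 * lam + astar d r s i + astar d r s (i + 1) = 0)
      \<and> (((\<forall>i. i \<le> d div 2 \<longrightarrow> ub i = ustar d r s (2 * i))
           \<and> (\<forall>i. d div 2 + 1 \<le> i \<and> i \<le> d \<longrightarrow> ub i = ustar d r s (2 * (d - i) + 1)))
         \<or> ((\<forall>i. i < (d + 1) div 2 \<longrightarrow> ub i = ustar d r s (2 * i + 1))
           \<and> (\<forall>i. (d + 1) div 2 \<le> i \<and> i \<le> d \<longrightarrow> ub i = ustar d r s (2 * (d - i))))))
    \<or> (2 * lam + astar d r s 0 + astar d r s 1 \<noteq> 0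
      \<and> (\<forall>i. 1 \<le> i \<and> i + 1 \<le> d \<longrightarrow> 2 * lam + astar d r s i + astar d r s (i + 1) = 0)
      \<and> (((\<forall>i. i \<le> d div 2 \<longrightarrow> ub i = ustar d r s (d - 2 * i))
           \<and> (\<forall>i. d div 2 + 1 \<le> i \<and> i \<le> d \<longrightarrow> ub i = ustar d r s (2 * i - d - 1)))
         \<or> ((\<forall>i. i < (d + 1) div 2 \<longrightarrow> ub i = ustar d r s (d - 2 * i - 1))
           \<and> (\<forall>i. (d + 1) div 2 \<le> i \<and> i \<le> d \<longrightarrow> ub i = ustar d r s (2 * i - d))))))"
proof -
  note r = assms(1) and s = assms(2) and d = assms(3)
  obtain \<sigma> where \<sigma>: "bij_betw \<sigma> {0..d} {0..d}" and ub: "\<forall>i\<le>d. ub i = ustar d r s (\<sigma> i)"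
    using assms(4) by blast
  have \<sigma>_le: "\<sigma> i \<le> d" if "i \<le> d" for i using \<sigma> that by (auto simp: bij_betw_def)
  define D where "D k \<longleftrightarrow> 2 * lam + astar d r s k + astar d r s (k + 1) \<noteq> 0" for k
  have d3: "D 0 \<or> D 2" if "d = 3" "D 1"
  proof -
    have "D 0 \<longleftrightarrow> 2 * lam + astar 3 r s 0 + astar 3 r s 1 \<noteq> 0"
      "D 1 \<longleftrightarrow> 2 * lam + astar 3 r s 1 + astar 3 r s 2 \<noteq> 0"
      "D 2 \<longleftrightarrow> 2 * lam + astar 3 r s 2 + astar 3 r s 3 \<noteq> 0"
      unfolding D_def \<open>d = 3\<close> by (simp_all add: eval_nat_numeral)
    then show ?thesis using astar_3_adjacent_sums[OF r s] \<open>D 1\<close> by blast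
  qed
  have "irred_tridiag d (rep_matrix d (Lsq d r s lam) ub) \<longleftrightarrow> path_ordering d (sq_adj D) \<sigma>"
    unfolding D_def by (rule irred_tridiag_Lsq_iff[OF r s \<sigma> ub])
  also have "\<dots> \<longleftrightarrow>
    (D (d - 1) \<and> (\<forall>i. i + 2 \<le> d \<longrightarrow> \<not> D i)
      \<and> ((\<forall>i\<le>d. \<sigma> i = zigzag d i) \<or> (\<forall>i\<le>d. \<sigma> i = zigzag d (d - i))))
    \<or> (D 0 \<and> (\<forall>i. 1 \<le> i \<and> i + 1 \<le> d \<longrightarrow> \<not> D i)
      \<and> ((\<forall>i\<le>d. \<sigma> i = d - zigzag d i) \<or> (\<forall>i\<le>d. \<sigma> i = d - zigzag d (d - i))))"
    by (rule sq_adj_path_ordering_iff[OF d \<sigma> d3])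
  finally show ?thesis
    using d by (simp only: ustar_zigzag_orderings[OF r s ub \<sigma>_le]) (simp add: D_def)
qed

end
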